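(* Let $r,r'$ be behaviors with $r\simeq r'$ and $r'$ fork-free (the constructor $\mathrm{fork}$ does not occur in $r'$). Then $\mathcal C(\partial_w r)\sqsubseteq\varepsilon$ for every $w\in\Sigma^*$.
   Context: Let $\Sigma$ be a finite alphabet. Behaviors are the terms generated by $r,s ::= \phi \mid \varepsilon \mid x\ (x\in\Sigma) \mid r+s \mid r\cdot s \mid r^* \mid \mathrm{fork}(r)$. For words $v,w\in\Sigma^*$ the shuffle $v\| w\subseteq \Sigma^*$ is defined by $\varepsilon\|w=\{w\}$, $v\|\varepsilon=\{v\}$, $xv\|yw=\{x\}\cdot(v\|yw)\cup\{y\}\cdot(xv\|w)$ for $x,y\in\Sigma$, and it is lifted to languages by $L\|M=\bigcup_{v\in L,w\in M} v\|w$; $L\cdot M$ denotes concatenation of languages. For $K\subseteq\Sigma^*$ the trace language $L(r,K)\subseteq\Sigma^*$ is defined by structural recursion: $L(\phi,K)=\emptyset$, $L(\varepsilon,K)=K$, $L(x,K)=\{x\}\cdot K$, $L(r+s,K)=L(r,K)\cup L(s,K)$, $L(r\cdot s,K)=L(r,L(s,K))$, $L(r^*,K)$ is the least fixpoint (w.r.t. $\subseteq$) of the monotone map $X\mapsto L(r,X)\cup K$, and $L(\mathrm{fork}(r),K)=L(r)\|K$, where $L(r)=L(r,\{\varepsilon\})$. Semantic containment: $r\sqsubseteq s$ iff $L(r,K)\subseteq L(s,K)$ for all $K\subseteq\Sigma^*$. The concurrent part $\mathcal C(r)$ is the behavior defined by: $\mathcal C(\phi)=\phi$, $\mathcal C(\varepsilon)=\varepsilon$,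 $\mathcal C(x)=\phi$, $\mathcal C(r+s)=\mathcal C(r)+\mathcal C(s)$, $\mathcal C(r\cdot s)=\mathcal C(r)\cdot\mathcal C(s)$, $\mathcal C(r^* )=\mathcal C(r)^*$, $\mathcal C(\mathrm{fork}(r))=\mathrm{fork}(r)$. The derivative $\partial_x r$ of a behavior $r$ by $x\in\Sigma$ is the behavior defined by: $\partial_x\phi=\phi$, $\partial_x\varepsilon=\phi$, $\partial_x y=\varepsilon$ if $y=x$ and $\phi$ otherwise, $\partial_x(r+s)=\partial_x r+\partial_x s$, $\partial_x(r\cdot s)=\partial_x r\cdot s+\mathcal C(r)\cdot\partial_x s$, $\partial_x(r^* )=\partial_x r\cdot r^*$, $\partial_x(\mathrm{fork}(r))=\mathrm{fork}(\partial_x r)$. It is extended to words by $\partial_\varepsilon r=r$ and $\partial_{xw}r=\partial_w(\partial_x r)$ for $x\in\Sigma$, $w\in\Sigma^*$. Similarity $\simeq$ is the smallest relation on behaviors that is reflexive, symmetric, transitive, closed under contexts (if $s\simeq t$ then $E[s]\simeq E[t]$ for every context $E ::= [\,] \mid E^* \mid E\cdot s \mid r\cdot E \mid E+s \mid r+E \mid \mathrm{fork}(E)$, where $E[t]$ replaces the hole by $t$), and contains the axioms $r+(s+t)\simeq(r+s)+t$, $r+s\simeq s+r$, $r+r\simeq r$, $r+\phi\simeq r$, $\phi+r\simeq r$, $\varepsilon\cdot r\simeq r$, $r\cdot\varepsilon\simeq r$, $\varepsilon^*\simeq\varepsilon$, $\mathrm{fork}(\varepsilon)\simeq\varepsilon$,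 $\phi\cdot r\simeq\phi$, $r\cdot\phi\simeq\phi$, $\phi^*\simeq\varepsilon$, $\mathrm{fork}(\phi)\simeq\phi$. *)

theory Defs
  imports Main
begin

datatype 'a beh = Phi | Eps | Sym 'a | Alt "'a beh" "'a beh" | Seq "'a beh" "'a beh"
  | Star "'a beh" | Fork "'a beh"

definition shuffle_lang :: "'a list set \<Rightarrow> 'a list set \<Rightarrow> 'a list set" where
  "shuffle_lang L M = (\<Union>v\<in>L. \<Union>w\<in>M. shuffles v w)"

primrec Lang :: "'a beh \<Rightarrow> 'a list set \<Rightarrow> 'a list set" where
  "Lang Phi K = {}"
| "Lang Eps K = K"
| "Lang (Sym x) K = (\<lambda>w. x # w) ` K"
| "Lang (Alt r s) K = Lang r K \<union> Lang s K"
| "Lang (Seq r s) K = Lang r (Lang s K)"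
| "Lang (Star r) K = lfp (\<lambda>X. Lang r X \<union> K)"
| "Lang (Fork r) K = shuffle_lang (Lang r {[]}) K"

definition contained :: "'a beh \<Rightarrow> 'a beh \<Rightarrow> bool" (infix "\<sqsubseteq>\<^sub>b" 50) where
  "r \<sqsubseteq>\<^sub>b s \<longleftrightarrow> (\<forall>K. Lang r K \<subseteq> Lang s K)"

primrec conc :: "'a beh \<Rightarrow> 'a beh" where
  "conc Phi = Phi"
| "conc Eps = Eps"
| "conc (Sym x) = Phi"
| "conc (Alt r s) = Alt (conc r) (conc s)"
| "conc (Seq r s) = Seq (conc r) (conc s)"
| "conc (Star r) = Star (conc r)"
| "conc (Fork r) = Fork r"

primrec deriv :: "'a \<Rightarrow> 'a beh \<Rightarrow> 'a beh" where
  "deriv x Phi = Phi"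
| "deriv x Eps = Phi"
| "deriv x (Sym y) = (if y = x then Eps else Phi)"
| "deriv x (Alt r s) = Alt (deriv x r) (deriv x s)"
| "deriv x (Seq r s) = Alt (Seq (deriv x r) s) (Seq (conc r) (deriv x s))"
| "deriv x (Star r) = Seq (deriv x r) (Star r)"
| "deriv x (Fork r) = Fork (deriv x r)"

primrec deriv_word :: "'a list \<Rightarrow> 'a beh \<Rightarrow> 'a beh" where
  "deriv_word [] r = r"
| "deriv_word (x # w) r = deriv_word w (deriv x r)"

primrec fork_free :: "'a beh \<Rightarrow> bool" where
  "fork_free Phi = True"
| "fork_free Eps = True"
| "fork_free (Sym x) = True"
| "fork_free (Alt r s) = (fork_free r \<and> fork_free s)"
| "fork_free (Seq r s) = (fork_free r \<and> fork_free s)"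
| "fork_free (Star r) = fork_free r"
| "fork_free (Fork r) = False"

datatype 'a ctx = Hole | CStar "'a ctx" | CSeqL "'a ctx" "'a beh" | CSeqR "'a beh" "'a ctx"
  | CAltL "'a ctx" "'a beh" | CAltR "'a beh" "'a ctx" | CFork "'a ctx"

primrec fill :: "'a ctx \<Rightarrow> 'a beh \<Rightarrow> 'a beh" where
  "fill Hole t = t"
| "fill (CStar E) t = Star (fill E t)"
| "fill (CSeqL E s) t = Seq (fill E t) s"
| "fill (CSeqR r E) t = Seq r (fill E t)"
| "fill (CAltL E s) t = Alt (fill E t) s"
| "fill (CAltR r E) t = Alt r (fill E t)"
| "fill (CFork E) t = Fork (fill E t)"

inductive sim :: "'a beh \<Rightarrow> 'a beh \<Rightarrow> bool" (infix "\<simeq>\<^sub>b" 50) where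
  sim_refl: "r \<simeq>\<^sub>b r"
| sim_sym: "r \<simeq>\<^sub>b s \<Longrightarrow> s \<simeq>\<^sub>b r"
| sim_trans: "r \<simeq>\<^sub>b s \<Longrightarrow> s \<simeq>\<^sub>b t \<Longrightarrow> r \<simeq>\<^sub>b t"
| sim_ctx: "s \<simeq>\<^sub>b t \<Longrightarrow> fill E s \<simeq>\<^sub>b fill E t"
| ax_assoc: "Alt r (Alt s t) \<simeq>\<^sub>b Alt (Alt r s) t"
| ax_comm: "Alt r s \<simeq>\<^sub>b Alt s r"
| ax_idem: "Alt r r \<simeq>\<^sub>b r"
| ax_phi_r: "Alt r Phi \<simeq>\<^sub>b r"
| ax_phi_l: "Alt Phi r \<simeq>\<^sub>b r"
| ax_eps_l: "Seq Eps r \<simeq>\<^sub>b r"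
| ax_eps_r: "Seq r Eps \<simeq>\<^sub>b r"
| ax_star_eps: "Star Eps \<simeq>\<^sub>b Eps"
| ax_fork_eps: "Fork Eps \<simeq>\<^sub>b Eps"
| ax_seq_phi_l: "Seq Phi r \<simeq>\<^sub>b Phi"
| ax_seq_phi_r: "Seq r Phi \<simeq>\<^sub>b Phi"
| ax_star_phi: "Star Phi \<simeq>\<^sub>b Eps"
| ax_fork_phi: "Fork Phi \<simeq>\<^sub>b Phi"

end

theory Submission
  imports Defs
begin

text \<open>Similarity is sound for the trace semantics and is a congruence that commutes with
  \<open>conc\<close> and with derivatives, so \<open>conc (deriv_word w r) \<simeq>\<^sub>b conc (deriv_word w r')\<close>.
  Derivatives of a fork-free behavior are fork-free, and the concurrent part of a fork-free
  behavior is built from \<open>Phi\<close> and \<open>Eps\<close> alone, so its traces from \<open>K\<close> stay in \<open>K\<close>.\<close>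

lemma Lang_mono: "K \<subseteq> K' \<Longrightarrow> Lang r K \<subseteq> Lang r K'"
proof (induction r arbitrary: K K')
  case (Alt r s)
  then show ?case by (simp, meson le_supI1 le_supI2)
next
  case (Seq r s)
  then show ?case unfolding Lang.simps by meson
next
  case (Star r)
  then show ?case by (simp, intro lfp_mono) blast
next
  case (Fork r)
  then show ?case unfolding Lang.simps shuffle_lang_def by (meson UN_mono subset_refl)
qed auto

lemma Lang_empty: "Lang r {} = {}"
proof (induction r)
  case (Star r)
  then show ?case by (simp, intro lfp_eqI) (auto simp: mono_def Lang_mono)
qed (auto simp: shuffle_lang_def)

lemma Lang_fill_cong: "Lang s = Lang t \<Longrightarrow> Lang (fill E s) = Lang (fill E t)"
  by (induction E) (auto simp: fun_eq_iff)

lemma sim_Lang_eq: "s \<simeq>\<^sub>b t \<Longrightarrow> Lang s = Lang t"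
proof (induction rule: sim.induct)
  case sim_ctx
  show ?case using sim_ctx.IH by (rule Lang_fill_cong)
next
  case ax_star_eps
  have "lfp (\<lambda>X. X \<union> K) = K" for K :: "'a list set"
    by (rule lfp_eqI) (auto intro: monoI)
  then show ?case by (simp add: fun_eq_iff)
next
  case ax_star_phi
  show ?case by (simp add: fun_eq_iff lfp_const)
next
  case ax_fork_eps
  show ?case by (auto simp: fun_eq_iff shuffle_lang_def)
next
  case ax_fork_phi
  show ?case by (auto simp: fun_eq_iff shuffle_lang_def)
qed (simp_all add: fun_eq_iff Un_ac Lang_empty)

lemma sim_Alt_cong: "a \<simeq>\<^sub>b c \<Longrightarrow> b \<simeq>\<^sub>b d \<Longrightarrow> Alt a b \<simeq>\<^sub>b Alt c d"
  by (rule sim_trans[OF sim_ctx[where E = "CAltL Hole b", simplified]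
                        sim_ctx[where E = "CAltR c Hole", simplified]])

lemma sim_Seq_cong: "a \<simeq>\<^sub>b c \<Longrightarrow> b \<simeq>\<^sub>b d \<Longrightarrow> Seq a b \<simeq>\<^sub>b Seq c d"
  by (rule sim_trans[OF sim_ctx[where E = "CSeqL Hole b", simplified]
                        sim_ctx[where E = "CSeqR c Hole", simplified]])

lemma sim_Star_cong: "a \<simeq>\<^sub>b c \<Longrightarrow> Star a \<simeq>\<^sub>b Star c"
  by (rule sim_ctx[where E = "CStar Hole", simplified])

lemma sim_Fork_cong: "a \<simeq>\<^sub>b c \<Longrightarrow> Fork a \<simeq>\<^sub>b Fork c"
  by (rule sim_ctx[where E = "CFork Hole", simplified])

lemmas sim_congs = sim_Alt_cong sim_Seq_cong sim_Star_cong sim_Fork_cong sim_refl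

lemma conc_fill_sim:
  assumes "s \<simeq>\<^sub>b t" and "conc s \<simeq>\<^sub>b conc t"
  shows "conc (fill E s) \<simeq>\<^sub>b conc (fill E t)"
  using assms by (induction E) (auto intro: sim_congs sim_ctx)

lemma sim_conc: "s \<simeq>\<^sub>b t \<Longrightarrow> conc s \<simeq>\<^sub>b conc t"
proof (induction rule: sim.induct)
  case sim_ctx
  then show ?case by (rule conc_fill_sim)
next
  case sim_sym
  show ?case using sim_sym.IH by (rule sim.sim_sym)
next
  case sim_trans
  show ?case using sim_trans.IH by (rule sim.sim_trans)
qed (auto intro: sim.intros(1,5-))

lemma deriv_fill_sim:
  assumes "s \<simeq>\<^sub>b t" and "deriv x s \<simeq>\<^sub>b deriv x t"
  shows "deriv x (fill E s) \<simeq>\<^sub>b deriv x (fill E t)"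
proof -
  have fill_sim: "fill F s \<simeq>\<^sub>b fill F t" for F
    using assms(1) by (rule sim_ctx)
  show ?thesis
    using assms(2) by (induction E) (auto intro: sim_congs sim_conc fill_sim)
qed

lemma sim_deriv: "s \<simeq>\<^sub>b t \<Longrightarrow> deriv x s \<simeq>\<^sub>b deriv x t"
proof (induction rule: sim.induct)
  case sim_ctx
  then show ?case by (rule deriv_fill_sim)
next
  \<comment> \<open>The derivative of a sequence is a sum, so each sequencing axiom needs a second one.\<close>
  case ax_eps_l
  show ?case by (auto intro: sim_trans[OF sim_Alt_cong[OF sim.ax_seq_phi_l sim.ax_eps_l] sim.ax_phi_l])
next
  case ax_eps_r
  show ?case by (auto intro: sim_trans[OF sim_Alt_cong[OF sim.ax_eps_r sim.ax_seq_phi_r] sim.ax_phi_r])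
next
  case ax_seq_phi_l
  show ?case by (auto intro: sim_trans[OF sim_Alt_cong[OF sim.ax_seq_phi_l sim.ax_seq_phi_l] sim.ax_idem])
next
  case ax_seq_phi_r
  show ?case by (auto intro: sim_trans[OF sim_Alt_cong[OF sim.ax_seq_phi_r sim.ax_seq_phi_r] sim.ax_idem])
next
  case sim_sym
  show ?case using sim_sym.IH by (rule sim.sim_sym)
next
  case sim_trans
  show ?case using sim_trans.IH by (rule sim.sim_trans)
qed (auto intro: sim.intros(1,5-))

lemma sim_deriv_word: "s \<simeq>\<^sub>b t \<Longrightarrow> deriv_word w s \<simeq>\<^sub>b deriv_word w t"
  by (induction w arbitrary: s t) (auto intro: sim_deriv)

lemma fork_free_conc: "fork_free r \<Longrightarrow> fork_free (conc r)"
  by (induction r) auto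

lemma fork_free_deriv: "fork_free r \<Longrightarrow> fork_free (deriv x r)"
  by (induction r) (auto simp: fork_free_conc)

lemma fork_free_deriv_word: "fork_free r \<Longrightarrow> fork_free (deriv_word w r)"
  by (induction w arbitrary: r) (auto simp: fork_free_deriv)

lemma fork_free_Lang_conc_subset: "fork_free r \<Longrightarrow> Lang (conc r) K \<subseteq> K"
proof (induction r arbitrary: K)
  case (Seq r s)
  then show ?case by simp (meson Lang_mono order_trans)
next
  case (Star r)
  then show ?case by (simp, intro lfp_lowerbound) auto
qed auto

theorem lemma9:
  fixes r r' :: "'a::finite beh"
  assumes "r \<simeq>\<^sub>b r'" and "fork_free r'"
  shows "\<forall>w. conc (deriv_word w r) \<sqsubseteq>\<^sub>b Eps"
proof
  fix w
  have "Lang (conc (deriv_word w r)) = Lang (conc (deriv_word w r'))"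
    using assms(1) by (intro sim_Lang_eq sim_conc sim_deriv_word)
  moreover have "Lang (conc (deriv_word w r')) K \<subseteq> K" for K
    using assms(2) by (intro fork_free_Lang_conc_subset fork_free_deriv_word)
  ultimately show "conc (deriv_word w r) \<sqsubseteq>\<^sub>b Eps"
    by (simp add: contained_def)
qed

end
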